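(* Let $f:\mathbb{R}^d\to\mathbb{R}$ be differentiable with $G$-Lipschitz gradient and attain its minimum. Fix $c>0$, $T\ge1$, an initial point $x_1$, and run SGD with gradient clipping $$x_{t+1}=x_t-\alpha\,\mathrm{clip}(\nabla f(x_t)+\xi_t,c),\qquad t=1,\dots,T,$$ with $\alpha=1/\sqrt T$, where, conditionally on $x_t$, the zero-mean noise $\xi_t$ has density $p_t$. For each $t$ let $\tilde p_t$ be any density with $\tilde p_t(\xi)=\tilde p_t(-\xi)$ for all $\xi$ (possibly depending on $x_t$), and define $$b_t:=\int\big\langle\nabla f(x_t),\mathrm{clip}(\nabla f(x_t)+\xi,c)\big\rangle\,(p_t(\xi)-\tilde p_t(\xi))\,d\xi .$$ Then $$\frac1T\sum_{t=1}^T\mathbb{E}\Big[\mathbb{P}_{\xi\sim\tilde p_t}\left(\|\xi\|<\frac c4\right)\min\left\{\|\nabla f(x_t)\|,\frac34c\right\}\|\nabla f(x_t)\|\Big]\le\frac{D_f}{\sqrt T}+\frac{G}{2\sqrt T}c^2-\frac1T\sum_{t=1}^T\mathbb{E}[b_t],$$ where $D_f=f(x_1)-\min_x f(x)$ and the outer expectations are over the random iterates.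
   Context: For $g\in\mathbb{R}^d$ and $c>0$, $\mathrm{clip}(g,c)=g\cdot\min\left(1,\frac{c}{\|g\|}\right)$ (with $\mathrm{clip}(0,c)=0$); $\|\cdot\|$ is the Euclidean norm. $G$-Lipschitz gradient means $\|\nabla f(x)-\nabla f(y)\|\le G\|x-y\|$ for all $x,y$. *)

theory Defs
  imports "HOL-Probability.Probability"
begin

definition clip :: "'a::real_normed_vector \<Rightarrow> real \<Rightarrow> 'a" where
  "clip g c = (if g = 0 then 0 else min 1 (c / norm g) *\<^sub>R g)"

definition sgd_step :: "('a::euclidean_space \<Rightarrow> 'a) \<Rightarrow> real \<Rightarrow> real \<Rightarrow> ('a \<Rightarrow> 'a \<Rightarrow> real) \<Rightarrow> 'a \<Rightarrow> 'a measure" where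
  "sgd_step gradf \<alpha> c q x =
     distr (density lborel (q x)) borel (\<lambda>\<xi>. x - \<alpha> *\<^sub>R clip (gradf x + \<xi>) c)"

text \<open>sgd_dist ... n is the law of the iterate x_(n+1); the noise at time t (1-based)
  has conditional density p t x_t.\<close>
primrec sgd_dist :: "('a::euclidean_space \<Rightarrow> 'a) \<Rightarrow> real \<Rightarrow> real \<Rightarrow> (nat \<Rightarrow> 'a \<Rightarrow> 'a \<Rightarrow> real)
    \<Rightarrow> 'a \<Rightarrow> nat \<Rightarrow> 'a measure" where
  "sgd_dist gradf \<alpha> c p x1 0 = return borel x1"
| "sgd_dist gradf \<alpha> c p x1 (Suc n) = sgd_dist gradf \<alpha> c p x1 n \<bind> sgd_step gradf \<alpha> c (p (Suc n))"

end

theory Submission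
  imports Defs
begin

text \<open>
  A clipped step has length at most \<open>\<alpha> c\<close>, so the descent lemma for the \<open>G\<close>-smooth \<open>f\<close>
  gives \<open>f x\<^sub>t\<^sub>+\<^sub>1 \<le> f x\<^sub>t - \<alpha> \<langle>\<nabla>f x\<^sub>t, clip (\<nabla>f x\<^sub>t + \<xi>\<^sub>t) c\<rangle> + G \<alpha>\<^sup>2 c\<^sup>2 / 2\<close>.
  Taking expectations and telescoping bounds the sum of the expected alignments
  \<open>\<langle>\<nabla>f x\<^sub>t, clip (\<nabla>f x\<^sub>t + \<xi>\<^sub>t) c\<rangle>\<close> by \<open>(f x\<^sub>1 - min f) / \<alpha> + T G \<alpha> c\<^sup>2 / 2\<close>.
  The expected alignment under \<open>p\<^sub>t\<close> is the one under the symmetric density \<open>pt\<^sub>t\<close> plus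
  \<open>b\<^sub>t\<close>. Under a symmetric density the integrand may be averaged over \<open>\<xi>\<close> and \<open>-\<xi>\<close>, and
  for \<open>g = \<nabla>f x\<close> the average of \<open>\<langle>g, clip (g + \<xi>) c\<rangle>\<close> and \<open>\<langle>g, clip (g - \<xi>) c\<rangle>\<close> is
  nonnegative, and at least \<open>min |g| (3c/4) |g|\<close> when \<open>|\<xi>| < c/4\<close>.
\<close>

section \<open>Clipping\<close>

lemma norm_clip:
  assumes "c \<ge> 0"
  shows "norm (clip g c) = min (norm g) c"
proof (cases "g = 0")
  case False
  then show ?thesis
    using assms by (simp add: clip_def min_def field_simps)
qed (use assms in \<open>simp add: clip_def\<close>)

lemma norm_clip_le: "c \<ge> 0 \<Longrightarrow> norm (clip g c) \<le> c"
  by (simp add: norm_clip)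

lemma clip_eq_self: "norm g \<le> c \<Longrightarrow> clip g c = g"
  by (cases "g = 0") (simp_all add: clip_def)

lemma clip_eq_scaleR: "clip g c = min 1 (c / norm g) *\<^sub>R g"
  by (simp add: clip_def)

lemma borel_measurable_clip [measurable]:
  "(\<lambda>g::'a::euclidean_space. clip g c) \<in> borel_measurable borel"
  unfolding clip_eq_scaleR by measurable

lemma abs_inner_clip_le:
  fixes g v :: "'a::real_inner"
  assumes "c \<ge> 0"
  shows "\<bar>g \<bullet> clip v c\<bar> \<le> norm g * c"
proof -
  have "\<bar>g \<bullet> clip v c\<bar> \<le> norm g * norm (clip v c)"
    by (rule Cauchy_Schwarz_ineq2)
  also have "\<dots> \<le> norm g * c"
    using assms by (intro mult_left_mono norm_clip_le) auto
  finally show ?thesis .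
qed

lemma inner_clip_add_inner_clip_diff_nonneg:
  fixes g \<xi> :: "'a::real_inner"
  assumes c: "c \<ge> 0"
  shows "0 \<le> g \<bullet> clip (g + \<xi>) c + g \<bullet> clip (g - \<xi>) c"
proof -
  define u v where "u = g + \<xi>" and "v = g - \<xi>"
  define su sv where "su = min 1 (c / norm u)" and "sv = min 1 (c / norm v)"
  have s_nonneg: "0 \<le> su" "0 \<le> sv"
    using c by (auto simp: su_def sv_def)
  have s_norm: "su * norm u = min (norm u) c" "sv * norm v = min (norm v) c"
    using norm_clip[OF c, of u] norm_clip[OF c, of v] c
    by (simp_all add: clip_eq_scaleR su_def sv_def)
  \<comment> \<open>Via \<open>2 g = u + v\<close> and Cauchy-Schwarz, twice the sum is at least
    \<open>(|clip u c| - |clip v c|) (|u| - |v|)\<close>, and \<open>|clip w c| = min |w| c\<close> is monotone in \<open>|w|\<close>.\<close>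
  have "u + v = 2 *\<^sub>R g"
    by (simp add: u_def v_def scaleR_2)
  then have "2 * (g \<bullet> clip (g + \<xi>) c + g \<bullet> clip (g - \<xi>) c) = (u + v) \<bullet> (su *\<^sub>R u + sv *\<^sub>R v)"
    by (simp add: clip_eq_scaleR flip: u_def v_def su_def sv_def) (simp add: inner_add_right)
  also have "\<dots> = su * (norm u)\<^sup>2 + sv * (norm v)\<^sup>2 + (su + sv) * (u \<bullet> v)"
    by (simp add: algebra_simps power2_norm_eq_inner inner_commute)
  also have "\<dots> \<ge> su * (norm u)\<^sup>2 + sv * (norm v)\<^sup>2 - (su + sv) * (norm u * norm v)"
  proof -
    have "- (norm u * norm v) \<le> u \<bullet> v"
      using Cauchy_Schwarz_ineq2[of u v] by (simp add: abs_le_iff)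
    then have "(su + sv) * - (norm u * norm v) \<le> (su + sv) * (u \<bullet> v)"
      using s_nonneg by (intro mult_left_mono) auto
    then show ?thesis
      by simp
  qed
  also have "su * (norm u)\<^sup>2 + sv * (norm v)\<^sup>2 - (su + sv) * (norm u * norm v)
      = (su * norm u - sv * norm v) * (norm u - norm v)"
    by (simp add: algebra_simps power2_eq_square)
  also have "\<dots> \<ge> 0"
    unfolding s_norm
    by (cases "norm u \<le> norm v") (auto intro: mult_nonpos_nonpos simp: min_def)
  finally show ?thesis
    by simp
qed

lemma inner_clip_add_inner_clip_diff_ge_large:
  fixes g \<xi> :: "'a::real_inner"
  assumes c: "c > 0" and \<xi>: "norm \<xi> < c / 4" and g: "3 / 4 * c < norm g" and acute: "0 \<le> g \<bullet> \<xi>"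
  shows "3 / 2 * c * norm g \<le> g \<bullet> clip (g + \<xi>) c + g \<bullet> clip (g - \<xi>) c"
proof -
  define u v where "u = g + \<xi>" and "v = g - \<xi>"
  define su sv where "su = min 1 (c / norm u)" and "sv = min 1 (c / norm v)"
  have "(norm v)\<^sup>2 \<le> (norm u)\<^sup>2"
    using acute by (simp add: u_def v_def power2_norm_eq_inner algebra_simps inner_commute)
  then have v_le_u: "norm v \<le> norm u"
    by (simp add: power2_le_iff_abs_le)
  have "norm g - norm \<xi> \<le> norm v"
    unfolding v_def by (rule norm_triangle_ineq2)
  then have v_pos: "0 < norm v"
    using \<xi> g c by linarith
  \<comment> \<open>\<open>g \<bullet> \<xi> \<ge> 0\<close> makes \<open>u\<close> the longer vector, so it is shrunk more.\<close>
  have "su \<le> sv"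
    unfolding su_def sv_def using v_le_u v_pos c
    by (intro min.mono divide_left_mono) (auto intro!: mult_pos_pos)
  moreover have "g \<bullet> \<xi> \<le> (norm g)\<^sup>2"
    using Cauchy_Schwarz_ineq2[of g \<xi>] \<xi> g mult_left_mono[of "norm \<xi>" "norm g" "norm g"]
    by (simp add: power2_eq_square)
  ultimately have "su * ((norm g)\<^sup>2 - g \<bullet> \<xi>) \<le> sv * ((norm g)\<^sup>2 - g \<bullet> \<xi>)"
    by (intro mult_right_mono) auto
  moreover have "g \<bullet> clip (g + \<xi>) c + g \<bullet> clip (g - \<xi>) c
      = su * ((norm g)\<^sup>2 + g \<bullet> \<xi>) + sv * ((norm g)\<^sup>2 - g \<bullet> \<xi>)"
    unfolding su_def sv_def u_def v_def clip_eq_scaleR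
    by (simp add: inner_add_right inner_diff_right power2_norm_eq_inner)
  ultimately have sum_ge: "2 * su * (norm g)\<^sup>2 \<le> g \<bullet> clip (g + \<xi>) c + g \<bullet> clip (g - \<xi>) c"
    by (simp add: algebra_simps)
  have "3 / 4 * c \<le> su * norm g"
  proof (cases "1 \<le> c / norm u")
    case True
    then show ?thesis
      using g by (simp add: su_def)
  next
    case False
    have "norm u \<le> norm g + norm \<xi>"
      unfolding u_def by (rule norm_triangle_ineq)
    also have "\<dots> \<le> 4 / 3 * norm g"
      using \<xi> g by linarith
    finally have "3 / 4 * c * norm u \<le> c * norm g"
      using c by (simp add: field_simps)
    moreover have "0 < norm u"
      using v_le_u v_pos by linarith
    ultimately show ?thesis
      using False by (simp add: su_def field_simps)
  qed
  then have "3 / 2 * c * norm g \<le> 2 * su * (norm g)\<^sup>2"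
    using mult_right_mono[of "3 / 4 * c" "su * norm g" "norm g"] by (simp add: power2_eq_square)
  with sum_ge show ?thesis
    by linarith
qed

lemma inner_clip_add_inner_clip_diff_ge:
  fixes g \<xi> :: "'a::real_inner"
  assumes c: "c > 0" and \<xi>: "norm \<xi> < c / 4"
  shows "2 * (min (norm g) (3 / 4 * c) * norm g) \<le> g \<bullet> clip (g + \<xi>) c + g \<bullet> clip (g - \<xi>) c"
proof (cases "3 / 4 * c < norm g")
  case large: True
  show ?thesis
  proof (cases "0 \<le> g \<bullet> \<xi>")
    case True
    then show ?thesis
      using inner_clip_add_inner_clip_diff_ge_large[OF c \<xi> large] large by simp
  next
    case False
    then show ?thesis
      using inner_clip_add_inner_clip_diff_ge_large[OF c _ large, of "- \<xi>"] \<xi> large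
      by (simp add: add.commute)
  qed
next
  case False
  then have "norm (g + \<xi>) \<le> c" "norm (g - \<xi>) \<le> c"
    using norm_triangle_ineq[of g \<xi>] norm_triangle_ineq4[of g \<xi>] \<xi> by linarith+
  then show ?thesis
    using False by (simp add: clip_eq_self inner_add_right inner_diff_right power2_eq_square
        flip: power2_norm_eq_inner)
qed

section \<open>Smoothness\<close>

lemma lipschitz_constant_nonneg:
  fixes F :: "'a::euclidean_space \<Rightarrow> 'b::real_normed_vector"
  assumes "\<And>x y. norm (F x - F y) \<le> G * norm (x - y)"
  shows "0 \<le> G"
proof -
  have "0 \<le> G * norm (One :: 'a)"
    using order_trans[OF norm_ge_zero assms[of One 0]] by simp
  then show ?thesis
    by (simp add: zero_le_mult_iff)
qed

lemma lipschitz_gradient_quadratic_bound: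
  fixes f :: "'a::real_inner \<Rightarrow> real"
  assumes grad: "\<And>x. (f has_derivative (\<lambda>h. gradf x \<bullet> h)) (at x)"
    and lip: "\<And>x y. norm (gradf x - gradf y) \<le> G * norm (x - y)"
  shows "f (x + h) \<le> f x + gradf x \<bullet> h + G / 2 * (norm h)\<^sup>2"
proof -
  define \<phi> where "\<phi> t = f (x + t *\<^sub>R h) - t * (gradf x \<bullet> h) - G / 2 * t\<^sup>2 * (norm h)\<^sup>2" for t
  define \<phi>' where "\<phi>' t = (gradf (x + t *\<^sub>R h) - gradf x) \<bullet> h - G * t * (norm h)\<^sup>2" for t
  have "((\<lambda>t. x + t *\<^sub>R h) has_derivative (\<lambda>s. s *\<^sub>R h)) (at t)" for t
    by (auto intro!: derivative_eq_intros)
  from diff_chain_at[OF this grad]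
  have "((\<lambda>t. f (x + t *\<^sub>R h)) has_derivative (\<lambda>s. gradf (x + t *\<^sub>R h) \<bullet> (s *\<^sub>R h))) (at t)" for t
    by (simp add: o_def)
  then have f_line_deriv:
    "((\<lambda>t. f (x + t *\<^sub>R h)) has_real_derivative gradf (x + t *\<^sub>R h) \<bullet> h) (at t)" for t
    by (simp add: has_field_derivative_def mult_commute_abs)
  have deriv: "(\<phi> has_real_derivative \<phi>' t) (at t)" for t
    unfolding \<phi>_def \<phi>'_def
    by (rule derivative_eq_intros f_line_deriv refl)+ (simp add: power2_eq_square algebra_simps)
  have "\<phi>' t \<le> 0" if "0 \<le> t" for t
  proof -
    have "(gradf (x + t *\<^sub>R h) - gradf x) \<bullet> h \<le> norm (gradf (x + t *\<^sub>R h) - gradf x) * norm h"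
      by (rule Cauchy_Schwarz_ineq2[THEN abs_le_D1])
    also have "\<dots> \<le> G * norm (t *\<^sub>R h) * norm h"
      using lip[of "x + t *\<^sub>R h" x] by (intro mult_right_mono) auto
    also have "\<dots> = G * t * (norm h)\<^sup>2"
      using that by (simp add: power2_eq_square)
    finally show ?thesis
      by (simp add: \<phi>'_def)
  qed
  then have "\<phi> 1 \<le> \<phi> 0"
    using deriv by (intro DERIV_nonpos_imp_nonincreasing[of 0 1]) auto
  then show ?thesis
    by (simp add: \<phi>_def)
qed

section \<open>Probability densities on euclidean space\<close>

definition prob_density :: "('a::euclidean_space \<Rightarrow> real) \<Rightarrow> bool" where
  "prob_density q \<longleftrightarrow>
     q \<in> borel_measurable borel \<and> (\<forall>\<xi>. 0 \<le> q \<xi>) \<and> (\<integral>\<^sup>+\<xi>. ennreal (q \<xi>) \<partial>lborel) = 1"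

context
  fixes q :: "'a::euclidean_space \<Rightarrow> real"
  assumes q: "prob_density q"
begin

lemma prob_density_measurable: "q \<in> borel_measurable borel"
  using q by (simp add: prob_density_def)

lemma prob_density_nonneg: "0 \<le> q \<xi>"
  using q by (simp add: prob_density_def)

lemma prob_density_integrable: "integrable lborel q"
  using q by (intro integrableI_nonneg) (auto simp: prob_density_def)

lemma prob_density_integral: "(\<integral>\<xi>. q \<xi> \<partial>lborel) = 1"
  using q by (subst integral_eq_nn_integral) (auto simp: prob_density_def)

lemma prob_space_density: "prob_space (density lborel q)"
  using q by (intro prob_spaceI) (simp add: emeasure_density prob_density_def)

lemma measure_density_eq_integral:
  assumes [measurable]: "S \<in> sets borel"
  shows "measure (density lborel q) S = (\<integral>\<xi>. indicator S \<xi> * q \<xi> \<partial>lborel)"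
proof -
  have [measurable]: "q \<in> borel_measurable borel"
    by (rule prob_density_measurable)
  have "measure (density lborel q) S = enn2real (\<integral>\<^sup>+\<xi>. ennreal (q \<xi>) * indicator S \<xi> \<partial>lborel)"
    unfolding measure_def by (subst emeasure_density) auto
  also have "\<dots> = (\<integral>\<xi>. indicator S \<xi> * q \<xi> \<partial>lborel)"
    by (rule enn2real_nn_integral_eq_integral)
      (auto simp: prob_density_nonneg prob_density_integrable split: split_indicator)
  finally show ?thesis .
qed

context
  fixes F :: "'a \<Rightarrow> real" and C :: real
  assumes [measurable]: "F \<in> borel_measurable borel" and F_bounded: "\<And>\<xi>. \<bar>F \<xi>\<bar> \<le> C"
begin

lemma integrable_bounded_mult_prob_density: "integrable lborel (\<lambda>\<xi>. F \<xi> * q \<xi>)"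
proof (rule Bochner_Integration.integrable_bound)
  show "integrable lborel (\<lambda>\<xi>. C * q \<xi>)"
    using prob_density_integrable by simp
  show "AE \<xi> in lborel. norm (F \<xi> * q \<xi>) \<le> norm (C * q \<xi>)"
    using F_bounded prob_density_nonneg
    by (intro AE_I2) (simp add: abs_mult mult_right_mono order_trans[OF _ abs_ge_self])
  show "(\<lambda>\<xi>. F \<xi> * q \<xi>) \<in> borel_measurable lborel"
    using prob_density_measurable by simp
qed

lemma abs_integral_bounded_mult_prob_density_le: "\<bar>\<integral>\<xi>. F \<xi> * q \<xi> \<partial>lborel\<bar> \<le> C"
proof -
  have "\<bar>\<integral>\<xi>. F \<xi> * q \<xi> \<partial>lborel\<bar> \<le> (\<integral>\<xi>. C * q \<xi> \<partial>lborel)"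
    using F_bounded prob_density_nonneg prob_density_integrable integrable_bounded_mult_prob_density
    by (intro integral_abs_bound_integral) (auto simp: abs_mult mult_right_mono)
  then show ?thesis
    by (simp add: prob_density_integral)
qed

end

end

lemma integral_lborel_reflect:
  fixes F :: "'a::euclidean_space \<Rightarrow> real"
  assumes "F \<in> borel_measurable borel"
  shows "(\<integral>\<xi>. F (- \<xi>) \<partial>lborel) = (\<integral>\<xi>. F \<xi> \<partial>lborel)"
proof -
  have "distr lborel borel uminus = (lborel :: 'a measure)"
    using lborel_affine[of "-1" "0::'a"] by (simp add: density_1)
  then have "(\<integral>\<xi>. F \<xi> \<partial>lborel) = (\<integral>\<xi>. F \<xi> \<partial>distr lborel borel uminus)"
    by simp
  also have "\<dots> = (\<integral>\<xi>. F (- \<xi>) \<partial>lborel)"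
    using assms by (intro integral_distr) auto
  finally show ?thesis
    by simp
qed

lemma measure_small_noise_le_integral_inner_clip:
  fixes q :: "'a::euclidean_space \<Rightarrow> real"
  assumes q: "prob_density q" and q_sym: "\<And>\<xi>. q \<xi> = q (- \<xi>)" and c: "c > 0"
  shows "measure (density lborel q) {\<xi>. norm \<xi> < c / 4} * min (norm g) (3 / 4 * c) * norm g
    \<le> (\<integral>\<xi>. (g \<bullet> clip (g + \<xi>) c) * q \<xi> \<partial>lborel)"
proof -
  define S where "S = {\<xi>::'a. norm \<xi> < c / 4}"
  define m where "m = min (norm g) (3 / 4 * c) * norm g"
  define h where "h \<xi> = g \<bullet> clip (g + \<xi>) c" for \<xi>
  have S [measurable]: "S \<in> sets borel"
    unfolding S_def by measurable
  have [measurable]: "h \<in> borel_measurable borel"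
    unfolding h_def by measurable
  have h_bounded: "\<bar>h \<xi>\<bar> \<le> norm g * c" for \<xi>
    unfolding h_def using c by (intro abs_inner_clip_le) simp
  have h_int: "integrable lborel (\<lambda>\<xi>. h \<xi> * q \<xi>)"
    by (rule integrable_bounded_mult_prob_density[OF q _ h_bounded]) simp
  have h_reflect_int: "integrable lborel (\<lambda>\<xi>. h (- \<xi>) * q \<xi>)"
    by (rule integrable_bounded_mult_prob_density[OF q _ h_bounded]) simp
  have S_int: "integrable lborel (\<lambda>\<xi>. indicator S \<xi> * q \<xi>)"
    by (rule integrable_bounded_mult_prob_density[OF q, where C=1])
      (simp_all split: split_indicator)
  have [measurable]: "q \<in> borel_measurable borel"
    using q by (rule prob_density_measurable)
  have reflect: "(\<integral>\<xi>. h (- \<xi>) * q \<xi> \<partial>lborel) = (\<integral>\<xi>. h \<xi> * q \<xi> \<partial>lborel)"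
    using integral_lborel_reflect[of "\<lambda>\<xi>. h \<xi> * q \<xi>"] by (simp flip: q_sym)
  have pointwise: "2 * m * (indicator S \<xi> * q \<xi>) \<le> h \<xi> * q \<xi> + h (- \<xi>) * q \<xi>" for \<xi>
  proof -
    have "2 * m * indicator S \<xi> \<le> h \<xi> + h (- \<xi>)"
      using inner_clip_add_inner_clip_diff_ge[OF c, of \<xi> g]
        inner_clip_add_inner_clip_diff_nonneg[of c g \<xi>] c
      by (cases "\<xi> \<in> S") (simp_all add: S_def m_def h_def)
    then have "2 * m * indicator S \<xi> * q \<xi> \<le> (h \<xi> + h (- \<xi>)) * q \<xi>"
      using prob_density_nonneg[OF q] by (rule mult_right_mono)
    then show ?thesis
      by (simp add: algebra_simps)
  qed
  have "2 * m * measure (density lborel q) S = (\<integral>\<xi>. 2 * m * (indicator S \<xi> * q \<xi>) \<partial>lborel)"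
    by (simp add: measure_density_eq_integral[OF q S])
  also have "\<dots> \<le> (\<integral>\<xi>. h \<xi> * q \<xi> + h (- \<xi>) * q \<xi> \<partial>lborel)"
    using S_int h_int h_reflect_int pointwise by (intro integral_mono) auto
  also have "\<dots> = 2 * (\<integral>\<xi>. h \<xi> * q \<xi> \<partial>lborel)"
    using h_int h_reflect_int reflect by simp
  finally show ?thesis
    by (simp add: S_def m_def h_def algebra_simps)
qed

section \<open>The clipped SGD process\<close>

locale clipped_sgd =
  fixes f :: "'a::euclidean_space \<Rightarrow> real" and gradf :: "'a \<Rightarrow> 'a"
    and G c \<alpha> :: real and x1 :: 'a and p :: "nat \<Rightarrow> 'a \<Rightarrow> 'a \<Rightarrow> real"
  assumes grad: "\<And>x. (f has_derivative (\<lambda>h. gradf x \<bullet> h)) (at x)"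
    and lip: "\<And>x y. norm (gradf x - gradf y) \<le> G * norm (x - y)"
    and c_pos: "0 < c" and step_size_pos: "0 < \<alpha>"
    and p_measurable [measurable]: "\<And>t. (\<lambda>(x, \<xi>). p t x \<xi>) \<in> borel_measurable (borel \<Otimes>\<^sub>M borel)"
    and p_nonneg: "\<And>t x \<xi>. 0 \<le> p t x \<xi>"
    and p_norm: "\<And>t x. (\<integral>\<^sup>+\<xi>. ennreal (p t x \<xi>) \<partial>lborel) = 1"
begin

lemma p_density: "prob_density (p t x)"
proof -
  have "(\<lambda>\<xi>. p t x \<xi>) \<in> borel_measurable borel"
    by measurable
  then show ?thesis
    using p_nonneg p_norm by (simp add: prob_density_def)
qed

abbreviation kernel :: "nat \<Rightarrow> 'a \<Rightarrow> 'a measure" where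
  "kernel t \<equiv> sgd_step gradf \<alpha> c (p t)"

abbreviation iterate :: "nat \<Rightarrow> 'a measure" where
  "iterate n \<equiv> sgd_dist gradf \<alpha> c p x1 n"

lemma G_nonneg: "0 \<le> G"
  using lip by (rule lipschitz_constant_nonneg)

lemma continuous_on_gradf: "continuous_on UNIV gradf"
proof (rule lipschitz_on_continuous_on)
  show "G-lipschitz_on UNIV gradf"
    using lip G_nonneg by (intro lipschitz_onI) (auto simp: dist_norm)
qed

lemma gradf_measurable [measurable]: "gradf \<in> borel_measurable borel"
  using continuous_on_gradf by (rule borel_measurable_continuous_onI)

lemma continuous_on_f: "continuous_on UNIV f"
  using grad has_derivative_continuous by (blast intro: continuous_at_imp_continuous_on)

lemma f_measurable [measurable]: "f \<in> borel_measurable borel"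
  using continuous_on_f by (rule borel_measurable_continuous_onI)

lemma sets_kernel [simp]: "sets (kernel t x) = sets borel"
  by (simp add: sgd_step_def)

lemma prob_space_kernel: "prob_space (kernel t x)"
  unfolding sgd_step_def
  by (intro prob_space.prob_space_distr prob_space_density p_density) simp

lemma emeasure_kernel:
  assumes [measurable]: "A \<in> sets borel"
  shows "emeasure (kernel t x) A
    = (\<integral>\<^sup>+\<xi>. ennreal (p t x \<xi>) * indicator A (x - \<alpha> *\<^sub>R clip (gradf x + \<xi>) c) \<partial>lborel)"
proof -
  have "emeasure (kernel t x) A
      = emeasure (density lborel (p t x)) ((\<lambda>\<xi>. x - \<alpha> *\<^sub>R clip (gradf x + \<xi>) c) -` A)"
    unfolding sgd_step_def by (subst emeasure_distr) simp_all
  also have "\<dots> = (\<integral>\<^sup>+\<xi>. ennreal (p t x \<xi>)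
      * indicator ((\<lambda>\<xi>. x - \<alpha> *\<^sub>R clip (gradf x + \<xi>) c) -` A) \<xi> \<partial>lborel)"
    using measurable_sets_borel[OF _ assms, of "\<lambda>\<xi>. x - \<alpha> *\<^sub>R clip (gradf x + \<xi>) c"]
    by (subst emeasure_density) simp_all
  finally show ?thesis
    by (simp add: indicator_def)
qed

lemma kernel_measurable [measurable]: "kernel t \<in> borel \<rightarrow>\<^sub>M subprob_algebra borel"
proof (rule measurable_subprob_algebra)
  fix A :: "'a set"
  assume [measurable]: "A \<in> sets borel"
  show "(\<lambda>x. emeasure (kernel t x) A) \<in> borel_measurable borel"
    by (subst emeasure_kernel) simp_all
qed (simp_all add: prob_space_kernel prob_space_imp_subprob_space)

lemma integral_kernel:
  assumes [measurable]: "F \<in> borel_measurable borel"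
  shows "(\<integral>y. F y \<partial>kernel t x) = (\<integral>\<xi>. F (x - \<alpha> *\<^sub>R clip (gradf x + \<xi>) c) * p t x \<xi> \<partial>lborel)"
proof -
  have "(\<integral>y. F y \<partial>kernel t x) = (\<integral>\<xi>. F (x - \<alpha> *\<^sub>R clip (gradf x + \<xi>) c) \<partial>density lborel (p t x))"
    unfolding sgd_step_def by (rule integral_distr) simp_all
  also have "\<dots> = (\<integral>\<xi>. p t x \<xi> * F (x - \<alpha> *\<^sub>R clip (gradf x + \<xi>) c) \<partial>lborel)"
    by (subst integral_density) (simp_all add: prob_density_nonneg[OF p_density])
  finally show ?thesis
    by (simp add: mult.commute)
qed

lemma AE_kernel_norm_le: "AE y in kernel t x. norm (y - x) \<le> \<alpha> * c"
proof -
  have "norm ((x - \<alpha> *\<^sub>R clip (gradf x + \<xi>) c) - x) \<le> \<alpha> * c" for \<xi>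
    using norm_clip_le[of c "gradf x + \<xi>"] c_pos step_size_pos by (simp add: mult_left_mono)
  moreover have "(AE y in kernel t x. norm (y - x) \<le> \<alpha> * c) \<longleftrightarrow>
      (AE \<xi> in density lborel (p t x). norm ((x - \<alpha> *\<^sub>R clip (gradf x + \<xi>) c) - x) \<le> \<alpha> * c)"
    unfolding sgd_step_def by (rule AE_distr_iff) simp_all
  ultimately show ?thesis
    by simp
qed

lemma prob_space_iterate: "prob_space (iterate n)"
  and sets_iterate [simp, measurable_cong]: "sets (iterate n) = sets borel"
proof (induction n)
  case 0
  show "prob_space (iterate 0)" "sets (iterate 0) = sets borel"
    by (simp_all add: prob_space_return)
next
  case (Suc n)
  have K: "kernel (Suc n) \<in> iterate n \<rightarrow>\<^sub>M subprob_algebra borel"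
    using kernel_measurable by (simp add: measurable_cong_sets[OF Suc.IH(2) refl])
  show "prob_space (iterate (Suc n))"
    unfolding sgd_dist.simps
    by (rule prob_space.prob_space_bind[OF Suc.IH(1) _ K]) (simp add: prob_space_kernel)
  show "sets (iterate (Suc n)) = sets borel"
    unfolding sgd_dist.simps by (rule sets_bind[OF _ prob_space.not_empty[OF Suc.IH(1)]]) simp
qed

lemma space_iterate [simp]: "space (iterate n) = UNIV"
  using sets_eq_imp_space_eq[OF sets_iterate[of n]] by simp

lemma kernel_measurable_iterate [measurable]: "kernel t \<in> iterate n \<rightarrow>\<^sub>M subprob_algebra borel"
  using kernel_measurable by (simp add: measurable_cong_sets[OF sets_iterate refl])

lemma AE_iterate_cball: "AE x in iterate n. x \<in> cball x1 (real n * \<alpha> * c)"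
proof (induction n)
  case (Suc n)
  have "AE x in iterate n. AE y in kernel (Suc n) x. y \<in> cball x1 (real (Suc n) * \<alpha> * c)"
    using Suc
  proof eventually_elim
    case (elim x)
    show ?case
      using AE_kernel_norm_le[where t="Suc n" and x=x]
    proof eventually_elim
      case (elim y)
      have "dist x1 y \<le> dist x1 x + norm (y - x)"
        by (simp add: dist_norm norm_diff_triangle_le[of x1 x _ y] norm_minus_commute)
      with elim \<open>x \<in> cball x1 (real n * \<alpha> * c)\<close> show ?case
        by (simp add: algebra_simps)
    qed
  qed
  then show ?case
    unfolding sgd_dist.simps by (subst AE_bind[OF kernel_measurable_iterate]) simp_all
qed (simp only: sgd_dist.simps, subst AE_return, auto)

lemma integrable_iterate_of_continuous_bound:
  fixes F H :: "'a \<Rightarrow> real"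
  assumes [measurable]: "F \<in> borel_measurable borel"
    and bound: "\<And>x. \<bar>F x\<bar> \<le> H x" and H: "continuous_on UNIV H"
  shows "integrable (iterate n) F"
proof -
  interpret prob_space "iterate n"
    by (rule prob_space_iterate)
  obtain M where M: "\<And>x. x \<in> cball x1 (real n * \<alpha> * c) \<Longrightarrow> norm (H x) \<le> M"
    using continuous_on_compact_bound[OF compact_cball continuous_on_subset[OF H subset_UNIV]]
    by blast
  show ?thesis
  proof (rule integrable_const_bound)
    show "AE x in iterate n. norm (F x) \<le> M"
      using AE_iterate_cball
    proof eventually_elim
      case (elim x)
      then show ?case
        using bound[of x] M[OF elim] by simp
    qed
  qed (simp add: measurable_cong_sets[OF sets_iterate refl])
qed

section \<open>Descent along the iterates\<close>

definition mean_inner_clip :: "('a \<Rightarrow> real) \<Rightarrow> 'a \<Rightarrow> real" where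
  "mean_inner_clip q x = (\<integral>\<xi>. (gradf x \<bullet> clip (gradf x + \<xi>) c) * q \<xi> \<partial>lborel)"

lemma abs_inner_grad_clip_le: "\<bar>gradf x \<bullet> clip (gradf x + \<xi>) c\<bar> \<le> norm (gradf x) * c"
  using c_pos by (intro abs_inner_clip_le) simp

lemma integrable_inner_clip_mult_prob_density:
  assumes "prob_density q"
  shows "integrable lborel (\<lambda>\<xi>. (gradf x \<bullet> clip (gradf x + \<xi>) c) * q \<xi>)"
  by (rule integrable_bounded_mult_prob_density[OF assms _ abs_inner_grad_clip_le]) measurable

lemma abs_mean_inner_clip_le:
  assumes "prob_density q"
  shows "\<bar>mean_inner_clip q x\<bar> \<le> norm (gradf x) * c"
  unfolding mean_inner_clip_def
  by (rule abs_integral_bounded_mult_prob_density_le[OF assms _ abs_inner_grad_clip_le]) measurable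

lemma integrable_iterate_mean_inner_clip:
  assumes [measurable]: "(\<lambda>(x, \<xi>). q x \<xi>) \<in> borel_measurable (borel \<Otimes>\<^sub>M borel)"
    and q: "\<And>x. prob_density (q x)"
  shows "integrable (iterate n) (\<lambda>x. mean_inner_clip (q x) x)"
proof (rule integrable_iterate_of_continuous_bound)
  show "(\<lambda>x. mean_inner_clip (q x) x) \<in> borel_measurable borel"
    unfolding mean_inner_clip_def by measurable
  show "continuous_on UNIV (\<lambda>x. norm (gradf x) * c)"
    by (intro continuous_intros continuous_on_gradf)
qed (rule abs_mean_inner_clip_le[OF q])

text \<open>The iterates up to time \<open>N\<close> stay in this ball, so the truncation changes none of
  their expectations; it makes \<open>f\<close> bounded, as \<open>integral_bind\<close> requires.\<close>
definition f_trunc :: "nat \<Rightarrow> 'a \<Rightarrow> real" where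
  "f_trunc N y = (if y \<in> cball x1 (real N * \<alpha> * c) then f y else 0)"

lemma f_trunc_measurable [measurable]: "f_trunc N \<in> borel_measurable borel"
proof -
  have [measurable]: "cball x1 (real N * \<alpha> * c) \<in> sets borel"
    by simp
  show ?thesis
    unfolding f_trunc_def by measurable
qed

lemma f_trunc_bounded: obtains M where "\<And>y. \<bar>f_trunc N y\<bar> \<le> M"
proof -
  obtain M where "0 \<le> M" and M: "\<And>y. y \<in> cball x1 (real N * \<alpha> * c) \<Longrightarrow> norm (f y) \<le> M"
    using continuous_on_compact_bound
        [OF compact_cball continuous_on_subset[OF continuous_on_f subset_UNIV]]
    by blast
  then have "\<bar>f_trunc N y\<bar> \<le> M" for y
    using M[of y] by (simp add: f_trunc_def)
  then show ?thesis
    using that by blast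
qed

lemma integrable_iterate_f_trunc: "integrable (iterate n) (f_trunc N)"
proof -
  obtain M where "\<And>y. \<bar>f_trunc N y\<bar> \<le> M"
    using f_trunc_bounded by blast
  then show ?thesis
    by (intro integrable_iterate_of_continuous_bound[where H="\<lambda>_. M"]) auto
qed

lemma f_trunc_step_le:
  assumes "n < N" and x: "x \<in> cball x1 (real n * \<alpha> * c)"
  shows "f_trunc N (x - \<alpha> *\<^sub>R clip (gradf x + \<xi>) c)
    \<le> f_trunc N x + G * \<alpha>\<^sup>2 * c\<^sup>2 / 2 - \<alpha> * (gradf x \<bullet> clip (gradf x + \<xi>) c)"
proof -
  define w where "w = clip (gradf x + \<xi>) c"
  have w: "norm w \<le> c"
    unfolding w_def using c_pos by (intro norm_clip_le) simp
  have "real (Suc n) * (\<alpha> * c) \<le> real N * (\<alpha> * c)" "real n * (\<alpha> * c) \<le> real N * (\<alpha> * c)"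
    using assms(1) step_size_pos c_pos by (intro mult_right_mono; simp)+
  then have radius: "real n * \<alpha> * c + \<alpha> * c \<le> real N * \<alpha> * c" "real n * \<alpha> * c \<le> real N * \<alpha> * c"
    by (simp_all add: algebra_simps)
  have "dist x1 (x - \<alpha> *\<^sub>R w) \<le> dist x1 x + dist x (x - \<alpha> *\<^sub>R w)"
    by (rule dist_triangle)
  also have "\<dots> = dist x1 x + norm (\<alpha> *\<^sub>R w)"
    by (simp add: dist_norm)
  also have "\<dots> \<le> real n * \<alpha> * c + \<alpha> * c"
    using x w step_size_pos by (intro add_mono) (simp_all add: mult_left_mono)
  finally have "x - \<alpha> *\<^sub>R w \<in> cball x1 (real N * \<alpha> * c)"
    using radius by simp
  moreover have "x \<in> cball x1 (real N * \<alpha> * c)"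
    using x radius by simp
  moreover have "f (x + - (\<alpha> *\<^sub>R w)) \<le> f x + gradf x \<bullet> - (\<alpha> *\<^sub>R w) + G / 2 * (norm (- (\<alpha> *\<^sub>R w)))\<^sup>2"
    by (rule lipschitz_gradient_quadratic_bound[OF grad lip])
  moreover have "G / 2 * (norm (- (\<alpha> *\<^sub>R w)))\<^sup>2 \<le> G * \<alpha>\<^sup>2 * c\<^sup>2 / 2"
  proof -
    have "(norm w)\<^sup>2 \<le> c\<^sup>2"
      using w by (simp add: power_mono)
    then show ?thesis
      using step_size_pos G_nonneg by (simp add: power_mult_distrib mult_left_mono flip: mult.assoc)
  qed
  ultimately show ?thesis
    by (simp add: f_trunc_def w_def)
qed

lemma integral_kernel_f_trunc_le:
  assumes "n < N" and "x \<in> cball x1 (real n * \<alpha> * c)"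
  shows "(\<integral>y. f_trunc N y \<partial>kernel (Suc n) x)
    \<le> f_trunc N x - \<alpha> * mean_inner_clip (p (Suc n) x) x + G * \<alpha>\<^sup>2 * c\<^sup>2 / 2"
proof -
  define q where "q = p (Suc n) x"
  define w where "w \<xi> = clip (gradf x + \<xi>) c" for \<xi>
  define K where "K = G * \<alpha>\<^sup>2 * c\<^sup>2 / 2"
  have q: "prob_density q"
    unfolding q_def by (rule p_density)
  have "(\<integral>y. f_trunc N y \<partial>kernel (Suc n) x) = (\<integral>\<xi>. f_trunc N (x - \<alpha> *\<^sub>R w \<xi>) * q \<xi> \<partial>lborel)"
    by (simp add: integral_kernel q_def w_def)
  also have "\<dots> \<le> (\<integral>\<xi>. (f_trunc N x + K) * q \<xi> - \<alpha> * ((gradf x \<bullet> w \<xi>) * q \<xi>) \<partial>lborel)"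
  proof (rule integral_mono)
    obtain M where "\<And>y. \<bar>f_trunc N y\<bar> \<le> M"
      using f_trunc_bounded by blast
    then show "integrable lborel (\<lambda>\<xi>. f_trunc N (x - \<alpha> *\<^sub>R w \<xi>) * q \<xi>)"
      by (intro integrable_bounded_mult_prob_density[OF q]) (auto simp: w_def)
    show "integrable lborel (\<lambda>\<xi>. (f_trunc N x + K) * q \<xi> - \<alpha> * ((gradf x \<bullet> w \<xi>) * q \<xi>))"
      using prob_density_integrable[OF q] integrable_inner_clip_mult_prob_density[OF q]
      by (simp add: w_def)
    show "f_trunc N (x - \<alpha> *\<^sub>R w \<xi>) * q \<xi> \<le> (f_trunc N x + K) * q \<xi> - \<alpha> * ((gradf x \<bullet> w \<xi>) * q \<xi>)"
      for \<xi>
      using mult_right_mono[OF f_trunc_step_le[OF assms] prob_density_nonneg[OF q]]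
      by (simp add: algebra_simps w_def K_def)
  qed
  also have "\<dots> = f_trunc N x + K - \<alpha> * mean_inner_clip q x"
    using prob_density_integrable[OF q] integrable_inner_clip_mult_prob_density[OF q]
    by (simp add: prob_density_integral[OF q] mean_inner_clip_def w_def)
  finally show ?thesis
    by (simp add: q_def K_def)
qed

lemma integral_iterate_Suc_f_trunc_le:
  assumes "n < N"
  shows "(\<integral>x. f_trunc N x \<partial>iterate (Suc n))
    \<le> (\<integral>x. f_trunc N x \<partial>iterate n) - \<alpha> * (\<integral>x. mean_inner_clip (p (Suc n) x) x \<partial>iterate n)
      + G * \<alpha>\<^sup>2 * c\<^sup>2 / 2"
proof -
  interpret prob_space "iterate n"
    by (rule prob_space_iterate)
  obtain M where M: "\<And>y. \<bar>f_trunc N y\<bar> \<le> M"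
    using f_trunc_bounded by blast
  define \<Phi> where "\<Phi> x = (\<integral>y. f_trunc N y \<partial>kernel (Suc n) x)" for x
  define D where "D x = mean_inner_clip (p (Suc n) x) x" for x
  define K where "K = G * \<alpha>\<^sup>2 * c\<^sup>2 / 2"
  have D_int: "integrable (iterate n) D"
    unfolding D_def by (rule integrable_iterate_mean_inner_clip[OF p_measurable p_density])
  have "(\<integral>x. f_trunc N x \<partial>iterate (Suc n)) = (\<integral>x. \<Phi> x \<partial>iterate n)"
    unfolding sgd_dist.simps \<Phi>_def
  proof (rule integral_bind[where B'=1 and K=borel])
    show "AE x in iterate n. emeasure (kernel (Suc n) x) (space (kernel (Suc n) x)) \<le> ennreal 1"
      by (simp add: prob_space.emeasure_space_1[OF prob_space_kernel])
  qed (use M finite_measure_axioms in auto)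
  also have "\<dots> \<le> (\<integral>x. f_trunc N x - \<alpha> * D x + K \<partial>iterate n)"
  proof (rule integral_mono_AE)
    have [measurable]: "\<Phi> \<in> borel_measurable borel"
      unfolding \<Phi>_def
      by (rule measurable_compose[OF kernel_measurable integral_measurable_subprob_algebra]) simp
    have "\<bar>\<Phi> x\<bar> \<le> M" for x
      unfolding \<Phi>_def integral_kernel[OF f_trunc_measurable]
      by (rule abs_integral_bounded_mult_prob_density_le[OF p_density _ M]) simp
    then show "integrable (iterate n) \<Phi>"
      by (intro integrable_iterate_of_continuous_bound[where H="\<lambda>_. M"]) auto
    show "integrable (iterate n) (\<lambda>x. f_trunc N x - \<alpha> * D x + K)"
      using integrable_iterate_f_trunc D_int by simp
    show "AE x in iterate n. \<Phi> x \<le> f_trunc N x - \<alpha> * D x + K"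
      using AE_iterate_cball
      by eventually_elim (use assms in \<open>simp add: \<Phi>_def D_def K_def integral_kernel_f_trunc_le\<close>)
  qed
  also have "\<dots> = (\<integral>x. f_trunc N x \<partial>iterate n) - \<alpha> * (\<integral>x. D x \<partial>iterate n) + K"
    using integrable_iterate_f_trunc D_int by (simp add: prob_space flip: space_iterate)
  finally show ?thesis
    by (simp add: D_def K_def)
qed

lemma integral_iterate_f_trunc_le:
  "n \<le> N \<Longrightarrow> (\<integral>x. f_trunc N x \<partial>iterate n)
    \<le> f x1 - \<alpha> * (\<Sum>t = 1..n. \<integral>x. mean_inner_clip (p t x) x \<partial>iterate (t - 1))
      + real n * (G * \<alpha>\<^sup>2 * c\<^sup>2 / 2)"
proof (induction n)
  case 0
  have "(\<integral>x. f_trunc N x \<partial>iterate 0) = f_trunc N x1"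
    by (simp add: integral_return)
  then show ?case
    using step_size_pos c_pos by (simp add: f_trunc_def)
next
  case (Suc n)
  define g where "g t = (\<integral>x. mean_inner_clip (p t x) x \<partial>iterate (t - 1))" for t
  define K where "K = G * \<alpha>\<^sup>2 * c\<^sup>2 / 2"
  have "(\<integral>x. f_trunc N x \<partial>iterate (Suc n)) \<le> (\<integral>x. f_trunc N x \<partial>iterate n) - \<alpha> * g (Suc n) + K"
    using integral_iterate_Suc_f_trunc_le[of n N] Suc.prems by (simp add: g_def K_def)
  also have "\<dots> \<le> f x1 - \<alpha> * (\<Sum>t = 1..n. g t) + real n * K - \<alpha> * g (Suc n) + K"
    using Suc by (simp add: g_def K_def)
  also have "\<dots> = f x1 - \<alpha> * (\<Sum>t = 1..Suc n. g t) + real (Suc n) * K"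
    by (simp add: algebra_simps)
  finally show ?case
    by (simp add: g_def K_def)
qed

lemma sum_integral_mean_inner_clip_le:
  assumes "bdd_below (range f)"
  shows "\<alpha> * (\<Sum>t = 1..N. \<integral>x. mean_inner_clip (p t x) x \<partial>iterate (t - 1))
    \<le> f x1 - (INF x. f x) + real N * (G * \<alpha>\<^sup>2 * c\<^sup>2 / 2)"
proof -
  interpret prob_space "iterate N"
    by (rule prob_space_iterate)
  have "AE x in iterate N. (INF x. f x) \<le> f_trunc N x"
    using AE_iterate_cball by eventually_elim (simp add: f_trunc_def cINF_lower assms)
  then have "(\<integral>x. (INF x. f x) \<partial>iterate N) \<le> (\<integral>x. f_trunc N x \<partial>iterate N)"
    by (intro integral_mono_AE integrable_iterate_f_trunc) simp_all
  then have "(INF x. f x) \<le> (\<integral>x. f_trunc N x \<partial>iterate N)"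
    by (simp add: prob_space flip: space_iterate)
  with integral_iterate_f_trunc_le[of N N] show ?thesis
    by simp
qed

lemma integral_small_noise_le:
  assumes q_measurable: "(\<lambda>(x, \<xi>). q x \<xi>) \<in> borel_measurable (borel \<Otimes>\<^sub>M borel)"
    and q: "\<And>x. prob_density (q x)" and q_sym: "\<And>x \<xi>. q x \<xi> = q x (- \<xi>)"
  shows "(\<integral>x. measure (density lborel (q x)) {\<xi>. norm \<xi> < c / 4}
        * min (norm (gradf x)) (3 / 4 * c) * norm (gradf x) \<partial>iterate n)
    \<le> (\<integral>x. mean_inner_clip (p t x) x \<partial>iterate n)
      - (\<integral>x. (\<integral>\<xi>. (gradf x \<bullet> clip (gradf x + \<xi>) c) * (p t x \<xi> - q x \<xi>) \<partial>lborel) \<partial>iterate n)"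
    (is "_ \<le> ?P - ?B")
proof -
  have bias: "(\<integral>\<xi>. (gradf x \<bullet> clip (gradf x + \<xi>) c) * (p t x \<xi> - q x \<xi>) \<partial>lborel)
      = mean_inner_clip (p t x) x - mean_inner_clip (q x) x" for x
    using integrable_inner_clip_mult_prob_density[OF p_density]
      integrable_inner_clip_mult_prob_density[OF q]
    by (simp add: mean_inner_clip_def right_diff_distrib)
  define L where "L x = measure (density lborel (q x)) {\<xi>. norm \<xi> < c / 4}
    * min (norm (gradf x)) (3 / 4 * c) * norm (gradf x)" for x
  have small_noise: "L x \<le> mean_inner_clip (q x) x" for x
    unfolding L_def mean_inner_clip_def
    by (rule measure_small_noise_le_integral_inner_clip) (use q q_sym c_pos in auto)
  have L_nonneg: "0 \<le> L x" for x
    using c_pos by (simp add: L_def)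
  have "(\<integral>x. L x \<partial>iterate n) \<le> (\<integral>x. mean_inner_clip (q x) x \<partial>iterate n)"
    using integrable_iterate_mean_inner_clip[OF q_measurable q] small_noise
      order_trans[OF L_nonneg small_noise]
    by (rule integral_mono'[of "iterate n" "\<lambda>x. mean_inner_clip (q x) x" L])
  also have "\<dots> = ?P - ?B"
    using integrable_iterate_mean_inner_clip[OF p_measurable p_density]
      integrable_iterate_mean_inner_clip[OF q_measurable q]
    by (simp add: bias)
  finally show ?thesis
    by (simp add: L_def)
qed

theorem sum_integral_small_noise_le:
  fixes pt :: "nat \<Rightarrow> 'a \<Rightarrow> 'a \<Rightarrow> real"
  assumes "bdd_below (range f)"
    and pt_measurable [measurable]: "\<And>t. (\<lambda>(x, \<xi>). pt t x \<xi>) \<in> borel_measurable (borel \<Otimes>\<^sub>M borel)"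
    and pt_nonneg: "\<And>t x \<xi>. 0 \<le> pt t x \<xi>"
    and pt_norm: "\<And>t x. (\<integral>\<^sup>+\<xi>. ennreal (pt t x \<xi>) \<partial>lborel) = 1"
    and pt_sym: "\<And>t x \<xi>. pt t x \<xi> = pt t x (- \<xi>)"
  shows "(\<Sum>t = 1..N. \<integral>x. measure (density lborel (pt t x)) {\<xi>. norm \<xi> < c / 4}
        * min (norm (gradf x)) (3 / 4 * c) * norm (gradf x) \<partial>iterate (t - 1))
    \<le> (f x1 - (INF x. f x)) / \<alpha> + real N * (G * \<alpha> * c\<^sup>2 / 2)
      - (\<Sum>t = 1..N. \<integral>x. (\<integral>\<xi>. (gradf x \<bullet> clip (gradf x + \<xi>) c) * (p t x \<xi> - pt t x \<xi>) \<partial>lborel)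
          \<partial>iterate (t - 1))"
    (is "?L \<le> ?R - ?B")
proof -
  have "(\<lambda>\<xi>. pt t x \<xi>) \<in> borel_measurable borel" for t x
    by measurable
  then have pt_density: "prob_density (pt t x)" for t x
    using pt_nonneg pt_norm by (simp add: prob_density_def)
  let ?S = "\<Sum>t = 1..N. \<integral>x. mean_inner_clip (p t x) x \<partial>iterate (t - 1)"
  have "?L \<le> ?S - ?B"
    unfolding sum_subtractf[symmetric]
    by (intro sum_mono integral_small_noise_le[of "pt _"] pt_measurable pt_density pt_sym)
  moreover have "\<alpha> * ?R = f x1 - (INF x. f x) + real N * (G * \<alpha>\<^sup>2 * c\<^sup>2 / 2)"
    using step_size_pos by (simp add: field_simps power2_eq_square)
  then have "\<alpha> * ?S \<le> \<alpha> * ?R"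
    using sum_integral_mean_inner_clip_le[OF assms(1), of N] by linarith
  then have "?S \<le> ?R"
    using step_size_pos by simp
  ultimately show ?thesis
    by linarith
qed

end

theorem corollary1:
  fixes f :: "'a::euclidean_space \<Rightarrow> real" and gradf :: "'a \<Rightarrow> 'a"
    and G c :: real and T :: nat and x1 :: 'a
    and p pt :: "nat \<Rightarrow> 'a \<Rightarrow> 'a \<Rightarrow> real"
  assumes grad: "\<And>x. (f has_derivative (\<lambda>h. gradf x \<bullet> h)) (at x)"
    and lip: "\<And>x y. norm (gradf x - gradf y) \<le> G * norm (x - y)"
    and minex: "\<exists>x0. \<forall>x. f x0 \<le> f x"
    and c_pos: "c > 0" and T_ge: "T \<ge> 1"
    and p_meas: "\<And>t. (\<lambda>(x, \<xi>). p t x \<xi>) \<in> borel_measurable (borel \<Otimes>\<^sub>M borel)"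
    and p_nonneg: "\<And>t x \<xi>. p t x \<xi> \<ge> 0"
    and p_norm: "\<And>t x. (\<integral>\<^sup>+ \<xi>. ennreal (p t x \<xi>) \<partial>lborel) = 1"
    and p_mean_int: "\<And>t x. integrable lborel (\<lambda>\<xi>. p t x \<xi> *\<^sub>R \<xi>)"
    and p_mean: "\<And>t x. (\<integral>\<xi>. p t x \<xi> *\<^sub>R \<xi> \<partial>lborel) = 0"
    and pt_meas: "\<And>t. (\<lambda>(x, \<xi>). pt t x \<xi>) \<in> borel_measurable (borel \<Otimes>\<^sub>M borel)"
    and pt_nonneg: "\<And>t x \<xi>. pt t x \<xi> \<ge> 0"
    and pt_norm: "\<And>t x. (\<integral>\<^sup>+ \<xi>. ennreal (pt t x \<xi>) \<partial>lborel) = 1"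
    and pt_sym: "\<And>t x \<xi>. pt t x \<xi> = pt t x (- \<xi>)"
  shows "(1 / real T) * (\<Sum>t = 1..T.
            \<integral>x. measure (density lborel (pt t x)) {\<xi>. norm \<xi> < c / 4}
                 * min (norm (gradf x)) (3 / 4 * c) * norm (gradf x)
              \<partial>(sgd_dist gradf (1 / sqrt (real T)) c p x1 (t - 1)))
    \<le> (f x1 - (INF x. f x)) / sqrt (real T) + G / (2 * sqrt (real T)) * c\<^sup>2
      - (1 / real T) * (\<Sum>t = 1..T.
            \<integral>x. (\<integral>\<xi>. (gradf x \<bullet> clip (gradf x + \<xi>) c) * (p t x \<xi> - pt t x \<xi>) \<partial>lborel)
              \<partial>(sgd_dist gradf (1 / sqrt (real T)) c p x1 (t - 1)))"
proof -
  define s where "s = sqrt (real T)"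
  have s: "0 < s" "real T = s\<^sup>2"
    using T_ge by (simp_all add: s_def)
  interpret clipped_sgd f gradf G c "1 / s" x1 p
    using grad lip c_pos s(1) p_meas p_nonneg p_norm by unfold_locales auto
  have "bdd_below (range f)"
    using minex by (auto simp: bdd_below_def)
  note bound = sum_integral_small_noise_le
    [where pt=pt and N=T, OF this pt_meas pt_nonneg pt_norm pt_sym]
  have average: "(1 / real T) * X \<le> D / s + G / (2 * s) * c\<^sup>2 - (1 / real T) * Y"
    if "X \<le> D / (1 / s) + real T * (G * (1 / s) * c\<^sup>2 / 2) - Y" for X Y D
  proof -
    have "(1 / real T) * X \<le> (1 / real T) * (D / (1 / s) + real T * (G * (1 / s) * c\<^sup>2 / 2) - Y)"
      using that by (intro mult_left_mono) auto
    also have "\<dots> = D / s + G / (2 * s) * c\<^sup>2 - (1 / real T) * Y"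
      using s by (simp add: field_simps power2_eq_square)
    finally show ?thesis .
  qed
  show ?thesis
    using average[OF bound] unfolding s_def .
qed

end
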